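(* For any positive integer $m$ and any integer $\Delta$ with $1\leq \Delta \leq m$ such that $(\Delta-1)m$ is even, there exists a finite simple undirected graph $G$ with $\operatorname{adim}(G)=m$ and maximum degree $\Delta$ such that $$\operatorname{adim}(G) = \frac{2(|V(G)|-1)}{\Delta+3}.$$
   Context: For a graph $G$, $d(u,v)$ is the shortest-path distance ($\infty$ if $u,v$ lie in different components), and $d_1(u,v)=\min(d(u,v),2)$. A set $A\subseteq V(G)$ is an adjacency resolving set if for all distinct $x,y\in V(G)$ there is $z\in A$ with $d_1(z,x)\neq d_1(z,y)$. The adjacency dimension $\operatorname{adim}(G)$ is the minimum cardinality of an adjacency resolving set. *)

theory Defs
  imports Main "HOL-Library.Extended_Nat"
begin

definition simple_graph :: "'a set \<Rightarrow> ('a \<Rightarrow> 'a \<Rightarrow> bool) \<Rightarrow> bool" where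
  "simple_graph V E \<longleftrightarrow> finite V \<and> (\<forall>x y. E x y \<longrightarrow> x \<in> V \<and> y \<in> V)
     \<and> (\<forall>x y. E x y \<longrightarrow> E y x) \<and> (\<forall>x. \<not> E x x)"

definition walk :: "'a set \<Rightarrow> ('a \<Rightarrow> 'a \<Rightarrow> bool) \<Rightarrow> 'a list \<Rightarrow> bool" where
  "walk V E p \<longleftrightarrow> p \<noteq> [] \<and> set p \<subseteq> V \<and> (\<forall>i. Suc i < length p \<longrightarrow> E (p ! i) (p ! Suc i))"

definition gdist :: "'a set \<Rightarrow> ('a \<Rightarrow> 'a \<Rightarrow> bool) \<Rightarrow> 'a \<Rightarrow> 'a \<Rightarrow> enat" where
  "gdist V E u v = (INF p \<in> {p. walk V E p \<and> hd p = u \<and> last p = v}. enat (length p - 1))"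

definition gdist1 :: "'a set \<Rightarrow> ('a \<Rightarrow> 'a \<Rightarrow> bool) \<Rightarrow> 'a \<Rightarrow> 'a \<Rightarrow> enat" where
  "gdist1 V E u v = min (gdist V E u v) 2"

definition adj_resolving :: "'a set \<Rightarrow> ('a \<Rightarrow> 'a \<Rightarrow> bool) \<Rightarrow> 'a set \<Rightarrow> bool" where
  "adj_resolving V E A \<longleftrightarrow> A \<subseteq> V \<and>
     (\<forall>x\<in>V. \<forall>y\<in>V. x \<noteq> y \<longrightarrow> (\<exists>z\<in>A. gdist1 V E z x \<noteq> gdist1 V E z y))"

definition adim :: "'a set \<Rightarrow> ('a \<Rightarrow> 'a \<Rightarrow> bool) \<Rightarrow> nat" where
  "adim V E = (LEAST k. \<exists>A. adj_resolving V E A \<and> card A = k)"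

definition degree :: "'a set \<Rightarrow> ('a \<Rightarrow> 'a \<Rightarrow> bool) \<Rightarrow> 'a \<Rightarrow> nat" where
  "degree V E v = card {u \<in> V. E v u}"

definition max_degree :: "'a set \<Rightarrow> ('a \<Rightarrow> 'a \<Rightarrow> bool) \<Rightarrow> nat" where
  "max_degree V E = Max (degree V E ` V)"

end

theory Submission
  imports Defs
begin

(* A vertex outside an adjacency resolving set A is determined by its trace, the set of its
   neighbours in A.  At most one trace is empty and at most |A| traces are singletons, all other
   traces have at least two elements, and the traces have at most |A| * D elements in total when
   all degrees are at most D.  Hence 2 |V| <= |A| (D + 3) + 2, and any graph attaining this bound
   has adjacency dimension |A| and maximum degree D.

   To attain it, take a (D - 1)-regular graph H on m vertices (a circulant graph, which exists
   because (D - 1) m is even) and let G be the bipartite incidence graph between the m vertices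
   of H and the family consisting of the empty set, the m singletons and the edges of H.  The m
   vertices of H then have degree D in G, they resolve G, and 2 |V(G)| = m (D + 3) + 2. *)

lemma walk_length_ge_3:
  assumes "walk V E p" "hd p = u" "last p = v" "u \<noteq> v" "\<not> E u v"
  shows "3 \<le> length p"
proof -
  have "p \<noteq> []" "length p \<noteq> 1"
    using assms(1-4) by (auto simp: walk_def length_Suc_conv)
  moreover have "length p \<noteq> 2"
  proof
    assume "length p = 2"
    then have "p = [u, v]" using assms(2,3) by (auto simp: numeral_2_eq_2 length_Suc_conv)
    then show False using assms(1,5) by (auto simp: walk_def)
  qed
  ultimately show ?thesis by (cases "length p") (auto simp: numeral_3_eq_3)
qed

lemma gdist1_eq:
  assumes "u \<in> V" "v \<in> V"
  shows "gdist1 V E u v = (if u = v then 0 else if E u v then 1 else 2)"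
proof -
  let ?walks = "{p. walk V E p \<and> hd p = u \<and> last p = v}"
  have short_walk: "gdist V E u v \<le> enat (length p - 1)" if "p \<in> ?walks" for p
    unfolding gdist_def using that by (rule INF_lower)
  consider "u = v" | "u \<noteq> v" "E u v" | "u \<noteq> v" "\<not> E u v" by blast
  then show ?thesis
  proof cases
    case 1
    with assms short_walk[of "[u]"] show ?thesis
      by (simp add: walk_def gdist1_def zero_enat_def[symmetric])
  next
    case 2
    have "gdist V E u v \<le> 1"
      using assms 2 short_walk[of "[u, v]"] by (simp add: walk_def nth_Cons one_enat_def split: nat.splits)
    moreover have "1 \<le> gdist V E u v"
      unfolding gdist_def
    proof (rule INF_greatest)
      fix p assume "p \<in> ?walks"
      with 2 have "2 \<le> length p" by (cases p rule: list.exhaust; cases "tl p") (auto simp: walk_def)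
      then show "1 \<le> enat (length p - 1)" by (simp add: one_enat_def)
    qed
    ultimately show ?thesis using 2 by (simp add: gdist1_def)
  next
    case 3
    have "2 \<le> gdist V E u v"
      unfolding gdist_def
      by (rule INF_greatest) (use 3 walk_length_ge_3 in fastforce)
    with 3 show ?thesis by (simp add: gdist1_def)
  qed
qed

lemma adj_resolving_iff_inj_on_traces:
  "adj_resolving V E A \<longleftrightarrow> A \<subseteq> V \<and> inj_on (\<lambda>x. {a \<in> A. E a x}) (V - A)"
proof (cases "A \<subseteq> V")
  case True
  have "(\<exists>z\<in>A. gdist1 V E z x \<noteq> gdist1 V E z y) \<longleftrightarrow>
      x \<in> A \<or> y \<in> A \<or> {a \<in> A. E a x} \<noteq> {a \<in> A. E a y}"
    if "x \<in> V" "y \<in> V" "x \<noteq> y" for x y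
  proof -
    have "gdist1 V E z x \<noteq> gdist1 V E z y \<longleftrightarrow> z = x \<or> z = y \<or> E z x \<noteq> E z y" if "z \<in> V" for z
      using that \<open>x \<in> V\<close> \<open>y \<in> V\<close> \<open>x \<noteq> y\<close> by (simp add: gdist1_eq)
    with True show ?thesis by blast
  qed
  then have "adj_resolving V E A \<longleftrightarrow>
      (\<forall>x\<in>V. \<forall>y\<in>V. x \<noteq> y \<longrightarrow> x \<in> A \<or> y \<in> A \<or> {a \<in> A. E a x} \<noteq> {a \<in> A. E a y})"
    unfolding adj_resolving_def using True by blast
  also have "\<dots> \<longleftrightarrow> inj_on (\<lambda>x. {a \<in> A. E a x}) (V - A)"
    unfolding inj_on_def by blast
  finally show ?thesis using True by blast
qed (simp add: adj_resolving_def)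

lemma card_le_adj_resolving:
  assumes "finite V" and deg: "\<forall>v\<in>V. degree V E v \<le> D" and res: "adj_resolving V E A"
  shows "2 * card V \<le> card A * (D + 3) + 2"
proof -
  define t where "t x = {a \<in> A. E a x}" for x
  define W where "W = V - A"
  define W0 where "W0 = {x \<in> W. t x = {}}"
  define W1 where "W1 = {x \<in> W. card (t x) = 1}"
  have "A \<subseteq> V" and inj: "inj_on t W"
    using res unfolding adj_resolving_iff_inj_on_traces t_def W_def by auto
  have "finite A"
    using \<open>finite V\<close> \<open>A \<subseteq> V\<close> finite_subset by blast
  then have fin: "finite A" "finite W" "\<And>x. finite (t x)"
    using \<open>finite V\<close> unfolding W_def t_def by auto
  have "card W0 = card (t ` W0)"
    using inj by (intro card_image[symmetric]) (auto simp: W0_def intro: inj_on_subset)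
  also have "\<dots> \<le> card {{}::'a set}"
    by (rule card_mono) (auto simp: W0_def)
  finally have W0: "card W0 \<le> 1" by simp
  have "card W1 = card (t ` W1)"
    using inj by (intro card_image[symmetric]) (auto simp: W1_def intro: inj_on_subset)
  also have "\<dots> \<le> card ((\<lambda>a. {a}) ` A)"
    using fin by (intro card_mono) (auto simp: W1_def t_def card_1_singleton_iff)
  also have "\<dots> \<le> card A"
    by (rule card_image_le[OF fin(1)])
  finally have W1: "card W1 \<le> card A" .
  have "(\<Sum>x\<in>W. card (t x)) = (\<Sum>a\<in>A. card {x \<in> W. E a x})"
    unfolding t_def using fin by (intro sum_multicount_gen) auto
  also have "\<dots> \<le> (\<Sum>a\<in>A. D)"
  proof (rule sum_mono)
    fix a assume "a \<in> A"
    have "card {x \<in> W. E a x} \<le> degree V E a"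
      unfolding degree_def W_def using \<open>finite V\<close> by (intro card_mono) auto
    then show "card {x \<in> W. E a x} \<le> D" using deg \<open>a \<in> A\<close> \<open>A \<subseteq> V\<close> by force
  qed
  finally have traces: "(\<Sum>x\<in>W. card (t x)) \<le> card A * D" by simp
  have small_traces: "2 \<le> card (t x) + (if x \<in> W1 then 1 else 0) + (if x \<in> W0 then 2 else 0)"
    if "x \<in> W" for x
    using that fin(3)[of x] unfolding W0_def W1_def
    by (cases "card (t x)") (auto simp: card_eq_0_iff)
  have "2 * card W = (\<Sum>x\<in>W. 2)" by simp
  also have "\<dots> \<le> (\<Sum>x\<in>W. card (t x) + (if x \<in> W1 then 1 else 0) + (if x \<in> W0 then 2 else 0))"
    by (rule sum_mono) (rule small_traces)
  also have "\<dots> = (\<Sum>x\<in>W. card (t x)) + card W1 + 2 * card W0"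
    using fin(2) by (simp add: sum.distrib sum.If_cases Int_def W0_def W1_def)
  finally have "2 * card W \<le> card A * D + card A + 2"
    using traces W0 W1 by linarith
  moreover have "card V = card A + card W"
    using card_Un_disjoint[of A W] fin \<open>A \<subseteq> V\<close> unfolding W_def by (simp add: Un_absorb1)
  ultimately show ?thesis by (simp add: algebra_simps)
qed

lemma adim_eq_if_extremal:
  assumes "finite V" "\<forall>v\<in>V. degree V E v \<le> D" "adj_resolving V E A"
    and "2 * card V = card A * (D + 3) + 2"
  shows "adim V E = card A"
  unfolding adim_def
proof (rule Least_equality)
  fix k assume "\<exists>B. adj_resolving V E B \<and> card B = k"
  then obtain B where "adj_resolving V E B" "card B = k" by blast
  with card_le_adj_resolving[OF assms(1,2)] assms(4) have "card A * (D + 3) \<le> k * (D + 3)"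
    by fastforce
  then show "card A \<le> k" by simp
qed (use assms(3) in blast)

lemma max_degree_eq_if_extremal:
  assumes "finite V" "\<forall>v\<in>V. degree V E v \<le> D" "adj_resolving V E A" "A \<noteq> {}"
    and "2 * card V = card A * (D + 3) + 2"
  shows "max_degree V E = D"
proof (rule antisym)
  have "V \<noteq> {}" using assms(3,4) by (auto simp: adj_resolving_def)
  then show "max_degree V E \<le> D"
    unfolding max_degree_def using assms(1,2) by simp
  have "\<forall>v\<in>V. degree V E v \<le> max_degree V E"
    unfolding max_degree_def using assms(1) by simp
  from card_le_adj_resolving[OF assms(1) this assms(3)] assms(5)
  have "card A * (D + 3) \<le> card A * (max_degree V E + 3)" by simp
  moreover have "card A > 0"
    using assms(1,3,4) by (auto simp: adj_resolving_def card_gt_0_iff intro: finite_subset)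
  ultimately show "D \<le> max_degree V E" by simp
qed

lemma circulant_graph:
  fixes m :: nat
  assumes "S \<subseteq> {1..<m}" "\<forall>s\<in>S. m - s \<in> S"
  defines "C \<equiv> \<lambda>x y. x < m \<and> y < m \<and> (y + m - x) mod m \<in> S"
  shows "simple_graph {..<m} C" "\<forall>x<m. degree {..<m} C x = card S"
proof -
  have diff: "(y + m - x) mod m = (if x \<le> y then y - x else y + m - x)" if "x < m" "y < m" for x y
    using that by (simp add: mod_if)
  have wrap: "(x + s) mod m = (if x + s < m then x + s else x + s - m)" if "x < m" "s < m" for x s
    using that by (simp add: mod_if le_mod_geq)
  have "C y x" if "C x y" for x y
  proof -
    have "m - (y + m - x) mod m \<in> S"
      using that assms(2) unfolding C_def by blast
    moreover have "m - (y + m - x) mod m = (x + m - y) mod m"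
      using that assms(1) unfolding C_def by (auto simp: diff)
    ultimately show ?thesis using that unfolding C_def by simp
  qed
  then show "simple_graph {..<m} C"
    unfolding simple_graph_def using assms(1) by (auto simp: C_def)
  show "\<forall>x<m. degree {..<m} C x = card S"
  proof (intro allI impI)
    fix x assume "x < m"
    have S_less: "s < m" if "s \<in> S" for s
      using that assms(1) by auto
    have "{y \<in> {..<m}. C x y} = (\<lambda>s. (x + s) mod m) ` S"
    proof (intro equalityI subsetI)
      fix y assume "y \<in> {y \<in> {..<m}. C x y}"
      then have "y < m" "(y + m - x) mod m \<in> S" unfolding C_def by auto
      moreover have "y = (x + (y + m - x) mod m) mod m"
        using \<open>x < m\<close> \<open>y < m\<close> by (simp add: diff wrap)
      ultimately show "y \<in> (\<lambda>s. (x + s) mod m) ` S" by blast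
    next
      fix y assume "y \<in> (\<lambda>s. (x + s) mod m) ` S"
      then obtain s where "s \<in> S" "y = (x + s) mod m" by blast
      moreover have "((x + s) mod m + m - x) mod m = s"
        using \<open>x < m\<close> S_less[OF \<open>s \<in> S\<close>] by (simp add: wrap diff)
      ultimately show "y \<in> {y \<in> {..<m}. C x y}"
        using \<open>x < m\<close> unfolding C_def by simp
    qed
    moreover have "inj_on (\<lambda>s. (x + s) mod m) S"
    proof (rule inj_onI)
      fix s s' assume "s \<in> S" "s' \<in> S" "(x + s) mod m = (x + s') mod m"
      with \<open>x < m\<close> S_less[of s] S_less[of s'] show "s = s'"
        by (simp add: wrap split: if_splits)
    qed
    ultimately show "degree {..<m} C x = card S"
      by (simp add: degree_def card_image)
  qed
qed

lemma regular_graph_exists: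
  fixes m r :: nat
  assumes "r < m" "even (r * m)"
  shows "\<exists>H. simple_graph {..<m} H \<and> (\<forall>x<m. degree {..<m} H x = r)"
proof -
  define k where "k = r div 2"
  \<comment> \<open>connection set \<open>{\<plusminus>1, ..., \<plusminus>k}\<close>, plus the antipodal shift \<open>m div 2\<close>
     when \<open>r = 2k + 1\<close> (then \<open>m\<close> is even)\<close>
  define S where "S = {1..k} \<union> {m - k..<m} \<union> (if odd r then {m div 2} else {})"
  have S: "S \<subseteq> {1..<m}" "\<forall>s\<in>S. m - s \<in> S"
    using assms unfolding S_def k_def by auto
  have "card S = r"
  proof -
    have "card ({1..k} \<union> {m - k..<m}) = 2 * k"
      using assms(1) unfolding k_def by (subst card_Un_disjoint) auto
    moreover have "m div 2 \<notin> {1..k} \<union> {m - k..<m}" if "odd r"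
      using assms that unfolding k_def by auto
    ultimately show ?thesis
      unfolding S_def k_def by (auto simp: card_insert_if)
  qed
  with circulant_graph[OF S] show ?thesis
    by blast
qed

lemma card_family_of_small_sets:
  assumes "finite U" "finite F" "\<forall>T\<in>F. T \<subseteq> U" "\<forall>T\<in>F. card T \<le> 2"
    and "{} \<in> F" "\<forall>a\<in>U. {a} \<in> F" "\<forall>a\<in>U. card {T \<in> F. a \<in> T} = D"
  shows "2 * card F = card U * (D + 1) + 2"
proof -
  define P where "P = {T \<in> F. card T = 2}"
  have fin_P: "finite P" using assms(2) by (simp add: P_def)
  have "T = {} \<or> T \<in> (\<lambda>a. {a}) ` U \<or> T \<in> P" if "T \<in> F" for T
  proof -
    have "finite T" using that assms(1,3) finite_subset by blast
    moreover have "card T \<le> 2" using that assms(4) by blast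
    ultimately consider "card T = 0" | "card T = 1" | "card T = 2"
      by linarith
    then show ?thesis
      using that assms(3) \<open>finite T\<close> by cases (auto simp: P_def card_1_singleton_iff)
  qed
  then have F_eq: "F = insert {} ((\<lambda>a. {a}) ` U \<union> P)"
    using assms(5,6) by (auto simp: P_def)
  have disj: "{} \<notin> (\<lambda>a. {a}) ` U \<union> P" "(\<lambda>a. {a}) ` U \<inter> P = {}"
    by (auto simp: P_def)
  have "card F = 1 + card U + card P"
    unfolding F_eq using assms(1) fin_P disj
    by (simp add: card_Un_disjoint card_image)
  moreover have "(\<Sum>T\<in>F. card T) = card U + 2 * card P"
    unfolding F_eq using assms(1) fin_P disj
    by (simp add: sum.union_disjoint sum.reindex P_def)
  moreover have "(\<Sum>T\<in>F. card T) = D * card U"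
  proof -
    have "(\<Sum>T\<in>F. card T) = (\<Sum>T\<in>F. card {a \<in> U. a \<in> T})"
      using assms(3) by (intro sum.cong refl arg_cong[where f = card]) auto
    also have "\<dots> = D * card U"
      using assms(1,2,7) by (intro sum_multicount) auto
    finally show ?thesis .
  qed
  ultimately show ?thesis by (simp add: algebra_simps)
qed

lemma trace_family_of_regular_graph:
  fixes m r :: nat
  assumes H: "simple_graph {..<m} H" and reg: "\<forall>x<m. degree {..<m} H x = r"
  defines "F \<equiv> insert {} ((\<lambda>i. {i}) ` {..<m} \<union> {{i, j} | i j. H i j})"
  shows "finite F" "\<forall>T\<in>F. T \<subseteq> {..<m}" "\<forall>T\<in>F. card T \<le> r + 1"
    and "\<forall>a<m. card {T \<in> F. a \<in> T} = r + 1" "2 * card F = m * (r + 2) + 2"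
proof -
  have edge: "i < m" "j < m" "i \<noteq> j" "H j i" if "H i j" for i j
    using H that unfolding simple_graph_def by auto
  show sub: "\<forall>T\<in>F. T \<subseteq> {..<m}"
    unfolding F_def using edge by auto
  then show fin: "finite F"
    by (intro finite_subset[of F "Pow {..<m}"]) auto
  have "r \<ge> 1" if "H i j" for i j
  proof -
    have "0 < card {u \<in> {..<m}. H i u}"
      using that edge(2)[OF that] by (auto simp: card_gt_0_iff)
    then show ?thesis using reg edge(1)[OF that] by (simp add: degree_def)
  qed
  then show "\<forall>T\<in>F. card T \<le> r + 1"
    unfolding F_def by (fastforce simp: card_insert_if)
  show count: "\<forall>a<m. card {T \<in> F. a \<in> T} = r + 1"
  proof (intro allI impI)
    fix a assume "a < m"
    have "{T \<in> F. a \<in> T} = insert {a} ((\<lambda>j. {a, j}) ` {j \<in> {..<m}. H a j})"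
      unfolding F_def using \<open>a < m\<close> edge by (auto simp: insert_commute)
    moreover have "inj_on (\<lambda>j. {a, j}) {j \<in> {..<m}. H a j}"
      using edge by (auto simp: inj_on_def doubleton_eq_iff)
    moreover have "{a} \<notin> (\<lambda>j. {a, j}) ` {j \<in> {..<m}. H a j}"
      using edge by auto
    ultimately show "card {T \<in> F. a \<in> T} = r + 1"
      using reg \<open>a < m\<close> by (simp add: card_image degree_def)
  qed
  have "\<forall>T\<in>F. card T \<le> 2"
    unfolding F_def by (auto simp: card_insert_if)
  with card_family_of_small_sets[of "{..<m}" F "r + 1"] fin sub count
  show "2 * card F = m * (r + 2) + 2"
    unfolding F_def by simp
qed

lemma incidence_graph_exists:
  fixes F :: "nat set set"
  assumes "finite F" "\<forall>T\<in>F. T \<subseteq> {..<m}"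
    and "\<forall>T\<in>F. card T \<le> D" "\<forall>a<m. card {T \<in> F. a \<in> T} \<le> D"
  shows "\<exists>(V :: nat set) E. simple_graph V E \<and> card V = m + card F \<and>
           adj_resolving V E {..<m} \<and> (\<forall>v\<in>V. degree V E v \<le> D)"
proof -
  define W where "W = {m..<m + card F}"
  obtain g where g: "bij_betw g W F"
    using finite_same_card_bij[of W F] assms(1) unfolding W_def by auto
  have g_sub: "g y \<subseteq> {..<m}" if "y \<in> W" for y
    using g assms(2) that by (auto simp: bij_betw_def)
  define V where "V = {..<m + card F}"
  define E where "E x y \<longleftrightarrow> (x < m \<and> y \<in> W \<and> x \<in> g y) \<or> (y < m \<and> x \<in> W \<and> y \<in> g x)" for x y
  have V_diff: "V - {..<m} = W"
    unfolding V_def W_def by auto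
  have traces: "{a \<in> {..<m}. E a y} = g y" if "y \<in> W" for y
    using that g_sub[OF that] unfolding E_def W_def by auto
  have "simple_graph V E"
    unfolding simple_graph_def V_def E_def W_def by auto
  moreover have "card V = m + card F"
    unfolding V_def by simp
  moreover have "adj_resolving V E {..<m}"
    unfolding adj_resolving_iff_inj_on_traces V_diff
    using inj_on_cong[of W, OF traces] bij_betw_imp_inj_on[OF g] by (simp add: V_def)
  moreover have "degree V E v \<le> D" if "v \<in> V" for v
  proof (cases "v < m")
    case True
    have "{u \<in> V. E v u} = {y \<in> W. v \<in> g y}"
      using True unfolding V_def W_def E_def by auto
    then have "degree V E v = card (g ` {y \<in> W. v \<in> g y})"
      unfolding degree_def using bij_betw_imp_inj_on[OF g]
      by (simp add: card_image inj_on_def)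
    also have "g ` {y \<in> W. v \<in> g y} = {T \<in> F. v \<in> T}"
      using g by (auto simp: bij_betw_def)
    finally show ?thesis using assms(4) True by simp
  next
    case False
    then have "v \<in> W" using that V_diff by blast
    then have "{u \<in> V. E v u} = g v"
      using False g_sub[OF \<open>v \<in> W\<close>] unfolding V_def E_def W_def by auto
    moreover have "g v \<in> F"
      using g \<open>v \<in> W\<close> by (auto simp: bij_betw_def)
    ultimately show ?thesis using assms(3) by (simp add: degree_def)
  qed
  ultimately show ?thesis by blast
qed

lemma extremal_graph_exists:
  fixes m D :: nat
  assumes "1 \<le> D" "D \<le> m" "even ((D - 1) * m)"
  shows "\<exists>(V :: nat set) E. simple_graph V E \<and> adj_resolving V E {..<m} \<and>
           (\<forall>v\<in>V. degree V E v \<le> D) \<and> 2 * card V = m * (D + 3) + 2"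
proof -
  define r where "r = D - 1"
  have "r < m" "even (r * m)" "D = r + 1"
    using assms unfolding r_def by auto
  then obtain H where H: "simple_graph {..<m} H" "\<forall>x<m. degree {..<m} H x = r"
    using regular_graph_exists by blast
  define F where "F = insert {} ((\<lambda>i. {i}) ` {..<m} \<union> {{i, j} | i j. H i j})"
  note F = trace_family_of_regular_graph[OF H, folded F_def]
  have "\<forall>a<m. card {T \<in> F. a \<in> T} \<le> r + 1"
    using F(4) by simp
  then obtain V E where "simple_graph V E" "card V = m + card F" "adj_resolving V E {..<m}"
    and "\<forall>v\<in>V. degree V E v \<le> r + 1"
    using incidence_graph_exists[OF F(1-3)] by blast
  moreover have "2 * (m + card F) = m * (D + 3) + 2"
    using F(5) \<open>D = r + 1\<close> by (simp add: algebra_simps)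
  ultimately show ?thesis
    using \<open>D = r + 1\<close> by (intro exI[of _ V] exI[of _ E]) auto
qed

theorem theorem3p1:
  fixes m \<Delta> :: nat
  assumes "1 \<le> m" and "1 \<le> \<Delta>" and "\<Delta> \<le> m" and "even ((\<Delta> - 1) * m)"
  shows "\<exists>(V :: nat set) E. simple_graph V E \<and> V \<noteq> {} \<and> adim V E = m \<and>
           max_degree V E = \<Delta> \<and>
           real (adim V E) = 2 * (real (card V) - 1) / (real \<Delta> + 3)"
proof -
  obtain V E where G: "simple_graph V E" "adj_resolving V E {..<m}"
    and deg: "\<forall>v\<in>V. degree V E v \<le> \<Delta>" and bound: "2 * card V = m * (\<Delta> + 3) + 2"
    using extremal_graph_exists[OF assms(2-4)] by blast
  have fin: "finite V" using G(1) by (simp add: simple_graph_def)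
  have extremal: "2 * card V = card {..<m} * (\<Delta> + 3) + 2"
    using bound by simp
  have adim: "adim V E = m"
    using adim_eq_if_extremal[OF fin deg G(2) extremal] by simp
  have "2 * real (card V) = real m * (real \<Delta> + 3) + 2"
    using arg_cong[OF bound, of real] by simp
  then have "real (adim V E) = 2 * (real (card V) - 1) / (real \<Delta> + 3)"
    using adim by (simp add: field_simps)
  moreover have "max_degree V E = \<Delta>"
    using max_degree_eq_if_extremal[OF fin deg G(2) _ extremal] assms(1)
    by (simp add: lessThan_empty_iff)
  moreover have "V \<noteq> {}"
    using G(2) assms(1) by (auto simp: adj_resolving_def lessThan_empty_iff)
  ultimately show ?thesis
    using G(1) adim by (intro exI[of _ V] exI[of _ E] conjI) simp_all
qed

end
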